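(* Fix an integer $M\ge 1$, $\lambda>0$, $\epsilon>0$, $L_{\max}>0$, a decoding error probability $\delta\in(0,0.5)$ and a channel gain $|h_{ab}|^2>0$. Let $X$ be a random variable that is the sum of $M$ independent exponential random variables each with mean $1/\lambda$ (i.e. $X$ has density $\frac{\lambda^M x^{M-1}e^{-\lambda x}}{(M-1)!}$, $x\ge 0$), and for $P_a>0$ define $$g(P_a)=\mathbb{E}\left[\ln(XP_a+1)-\frac{XP_a}{XP_a+1}\right].$$ For $L_M>0$ and $P_a>0$ let $$R(L_M,P_a)=\log_2\left(1+P_a|h_{ab}|^2\right)-\sqrt{\frac{1}{L_M}\left(1-\frac{1}{(1+P_a|h_{ab}|^2)^2}\right)}\,\frac{Q^{-1}(\delta)}{\ln 2}.$$ Consider the problem of maximizing $L_M\,R(L_M,P_a)(1-\delta)$ over $L_M$ and $P_a$ subject to $L_M\, g(P_a)\le 2\epsilon^2$ and $L_M\le L_{\max}$. Then, for a given $P_a$, the optimal number of channel uses is $$L_M^*=\min\left(L_{\max},\frac{2\epsilon^2}{g(P_a)}\right),$$ and the optimal transmit power $P_a$ is a solution of the one-dimensional problem of maximizing $L_M^*\,R(L_M^*,P_a)(1-\delta)$ over $P_a>0$.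
   Context: $Q^{-1}$ denotes the inverse of the Gaussian Q-function $Q(x)=\frac{1}{\sqrt{2\pi}}\int_x^\infty e^{-t^2/2}dt$. The quantity $L_M\left(\ln(XP_a+1)-\frac{XP_a}{XP_a+1}\right)$ is the Kullback–Leibler divergence between the distributions of $L_M$ i.i.d. observations $\mathcal{CN}(\mathbf{0},\mathbf{I}_M)$ and $\mathcal{CN}(\mathbf{0},P_a\mathbf{h}\mathbf{h}^H+\mathbf{I}_M)$ with $\|\mathbf{h}\|^2=X$, so the constraint $L_M g(P_a)\le 2\epsilon^2$ is the expected-KL covertness constraint; $L_M$ is treated as a continuous variable.
   Formalization: The optimality of $L_M^*$ for a given $P_a$ holds only for those $P_a>0$ with $R(L_M^*,P_a)\ge 0$, while the claim that the optimal $P_a$ solves the one-dimensional problem carries no such condition. Apart from conventions, each condition added here is assumed in the paper as well or is needed for the statement above to hold. *)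

theory Defs
  imports "HOL-Probability.Probability"
begin

definition Qfun :: "real \<Rightarrow> real" where
  "Qfun x = (LINT t:{x..}|lborel. exp (- (t^2) / 2) / sqrt (2 * pi))"

definition Qinv :: "real \<Rightarrow> real" where
  "Qinv d = (THE y. Qfun y = d)"

definition gfun :: "nat \<Rightarrow> real \<Rightarrow> real \<Rightarrow> real" where
  "gfun M lam P = (\<integral>x. erlang_density (M - 1) lam x *
        (ln (x * P + 1) - (x * P) / (x * P + 1)) \<partial>lborel)"

text \<open>R(L_M, P_a); h stands for |h_ab|^2.\<close>
definition Rate :: "real \<Rightarrow> real \<Rightarrow> real \<Rightarrow> real \<Rightarrow> real" where
  "Rate delta h L P = log 2 (1 + P * h)
     - sqrt ((1 / L) * (1 - 1 / (1 + P * h)^2)) * Qinv delta / ln 2"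

definition objective :: "real \<Rightarrow> real \<Rightarrow> real \<Rightarrow> real \<Rightarrow> real" where
  "objective delta h L P = L * Rate delta h L P * (1 - delta)"

definition feasible :: "nat \<Rightarrow> real \<Rightarrow> real \<Rightarrow> real \<Rightarrow> real \<Rightarrow> real \<Rightarrow> bool" where
  "feasible M lam eps Lmax L P \<longleftrightarrow>
     0 < L \<and> 0 < P \<and> L * gfun M lam P \<le> 2 * eps^2 \<and> L \<le> Lmax"

definition Lopt :: "nat \<Rightarrow> real \<Rightarrow> real \<Rightarrow> real \<Rightarrow> real \<Rightarrow> real" where
  "Lopt M lam eps Lmax P = min Lmax (2 * eps^2 / gfun M lam P)"

end

theory Submission
  imports Defs
begin

text \<open>In the variable \<open>s = sqrt L\<close> the objective is \<open>(1 - delta) * s * (A * s - C)\<close> with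
  \<open>A = log 2 (1 + P * h) \<ge> 0\<close>, an upward parabola through the origin, and \<open>A * s - C\<close> is
  \<open>s\<close> times the rate. Since \<open>ln (1 + y) > y / (1 + y)\<close> for \<open>y > 0\<close>, the function \<open>g\<close> is
  positive, so for fixed \<open>P\<close> the feasible \<open>L\<close> form the interval \<open>(0, Lopt P]\<close>. If the rate at
  \<open>Lopt P\<close> is nonnegative, the parabola is increasing on \<open>[0, sqrt (Lopt P)]\<close>, hence \<open>Lopt P\<close>
  is optimal. For a global maximiser \<open>(L0, P0)\<close>: were its value above the one at \<open>Lopt P0\<close>,
  the parabola would be decreasing already at \<open>sqrt L0\<close>, and the feasible point \<open>L0 / 4\<close>
  would be strictly better.\<close>

lemma integral_pos_of_pos_on:
  fixes f :: "'a \<Rightarrow> real"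
  assumes "integrable M f" and "AE x in M. 0 \<le> f x"
    and "A \<in> sets M" and "emeasure M A \<noteq> 0" and "\<And>x. x \<in> A \<Longrightarrow> 0 < f x"
  shows "0 < integral\<^sup>L M f"
proof -
  have "integral\<^sup>L M f \<noteq> 0"
  proof
    assume "integral\<^sup>L M f = 0"
    then have "AE x in M. f x = 0"
      using integral_nonneg_eq_0_iff_AE assms(1,2) by blast
    then have "AE x in M. x \<notin> A"
      by eventually_elim (use assms(5) in fastforce)
    moreover have "{x \<in> space M. \<not> x \<notin> A} = A"
      using sets.sets_into_space[OF assms(3)] by blast
    ultimately have "emeasure M A = 0"
      by (simp add: AE_iff_measurable[OF assms(3)])
    with assms(4) show False ..
  qed
  moreover have "0 \<le> integral\<^sup>L M f"
    using assms(2) by (rule integral_nonneg_AE)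
  ultimately show ?thesis by linarith
qed

lemma integrable_erlang_moment:
  assumes "0 < l"
  shows "integrable lborel (\<lambda>x. erlang_density k l x * x ^ i)"
proof (rule integrableI_nonneg)
  show "AE x in lborel. 0 \<le> erlang_density k l x * x ^ i"
    using assms by (intro AE_I2) (simp add: erlang_density_def)
  show "(\<integral>\<^sup>+ x. ennreal (erlang_density k l x * x ^ i) \<partial>lborel) < \<infinity>"
    using nn_integral_erlang_ith_moment[OF assms] by simp
qed simp

lemma ln_add1_minus_frac_bounds:
  fixes y :: real
  assumes "0 \<le> y"
  shows "0 \<le> ln (y + 1) - y / (y + 1)" and "ln (y + 1) - y / (y + 1) \<le> y"
    and "0 < y \<Longrightarrow> 0 < ln (y + 1) - y / (y + 1)"
proof -
  have "0 \<le> y / (y + 1)"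
    using assms by simp
  moreover have "ln (y + 1) \<le> y"
    using assms ln_le_minus_one[of "y + 1"] by simp
  moreover have "y / (y + 1) < ln (y + 1)" if "0 < y"
    using ln_add1_gt[OF that] by (simp add: add.commute)
  moreover have "y / (y + 1) \<le> ln (y + 1)"
    using ln_add1_ge[of y] assms by (simp add: add.commute)
  ultimately show "0 \<le> ln (y + 1) - y / (y + 1)" "ln (y + 1) - y / (y + 1) \<le> y"
    "0 < y \<Longrightarrow> 0 < ln (y + 1) - y / (y + 1)"
    by linarith+
qed

lemma gfun_pos:
  assumes "0 < lam" and "0 < P"
  shows "0 < gfun M lam P"
proof -
  define f where "f x = erlang_density (M - 1) lam x * (ln (x * P + 1) - x * P / (x * P + 1))"
    for x
  have f_nonneg: "0 \<le> f x" for x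
    using assms ln_add1_minus_frac_bounds(1)[of "x * P"]
    by (cases "x < 0") (simp_all add: f_def erlang_density_def)
  have f_bound: "norm (f x) \<le> norm (P * (erlang_density (M - 1) lam x * x ^ 1))" for x
  proof (cases "x < 0")
    case False
    then have "f x \<le> erlang_density (M - 1) lam x * (x * P)"
      unfolding f_def using assms ln_add1_minus_frac_bounds(2)[of "x * P"]
      by (intro mult_left_mono) auto
    then show ?thesis
      using f_nonneg[of x] False assms by (simp add: algebra_simps)
  qed (simp add: f_def erlang_density_def)
  have "integrable lborel f"
  proof (rule Bochner_Integration.integrable_bound)
    show "integrable lborel (\<lambda>x. P * (erlang_density (M - 1) lam x * x ^ 1))"
      using integrable_erlang_moment[OF assms(1), of "M - 1" 1] by simp
    show "f \<in> borel_measurable lborel"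
      unfolding f_def by measurable
  qed (use f_bound in simp)
  moreover have "0 < f x" if "x \<in> {0<..1}" for x
    using that assms ln_add1_minus_frac_bounds(3)[of "x * P"]
    by (simp add: f_def erlang_density_def)
  ultimately have "0 < integral\<^sup>L lborel f"
    using f_nonneg by (intro integral_pos_of_pos_on[of _ _ "{0<..1}"]) auto
  then show ?thesis
    unfolding gfun_def f_def .
qed

lemma feasible_iff_le_Lopt:
  assumes "0 < lam"
  shows "feasible M lam eps Lmax L P \<longleftrightarrow> 0 < P \<and> 0 < L \<and> L \<le> Lopt M lam eps Lmax P"
  using gfun_pos[OF assms, of P M]
  by (auto simp: feasible_def Lopt_def pos_le_divide_eq)

lemma feasible_Lopt:
  assumes "0 < lam" and "eps \<noteq> 0" and "0 < Lmax" and "0 < P"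
  shows "feasible M lam eps Lmax (Lopt M lam eps Lmax P) P"
  using gfun_pos[OF assms(1,4), of M] assms
  by (simp add: feasible_iff_le_Lopt Lopt_def)

lemma sqrt_mult_Rate:
  assumes "0 < L"
  shows "sqrt L * Rate delta h L P
    = log 2 (1 + P * h) * sqrt L - sqrt (1 - 1 / (1 + P * h)^2) * Qinv delta / ln 2"
  using assms by (simp add: Rate_def real_sqrt_mult real_sqrt_divide field_simps)

lemma mult_affine_mono:
  fixes a c s t :: real
  assumes "0 \<le> s" and "s \<le> t" and "0 \<le> a" and "c \<le> a * t"
  shows "s * (a * s - c) \<le> t * (a * t - c)"
proof -
  have "0 \<le> a * s"
    using assms by simp
  then have "0 \<le> a * (t + s) - c"
    using assms(4) by (simp add: distrib_left)
  then have "0 \<le> (t - s) * (a * (t + s) - c)"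
    using assms(2) by simp
  also have "\<dots> = t * (a * t - c) - s * (a * s - c)"
    by (simp add: algebra_simps)
  finally show ?thesis
    by simp
qed

lemma mult_affine_gt_halve:
  fixes a c s t :: real
  assumes "0 < s" and "s \<le> t" and "0 \<le> a" and "t * (a * t - c) < s * (a * s - c)"
  shows "s * (a * s - c) < s / 2 * (a * (s / 2) - c)"
proof -
  have "(t - s) * (a * (t + s) - c) = t * (a * t - c) - s * (a * s - c)"
    by (simp add: algebra_simps)
  then have "(t - s) * (a * (t + s) - c) < 0"
    using assms(4) by simp
  then have "a * (t + s) - c < 0"
    using assms(2) by (auto simp: mult_less_0_iff)
  moreover have "a * (3 / 2 * s) \<le> a * (t + s)"
    using assms by (intro mult_left_mono) auto
  ultimately have "s / 2 * (a * (3 / 2 * s) - c) < 0"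
    using assms(1) by (intro mult_pos_neg) auto
  moreover have "s / 2 * (a * (3 / 2 * s) - c) = s * (a * s - c) - s / 2 * (a * (s / 2) - c)"
    by (simp add: algebra_simps)
  ultimately show ?thesis
    by simp
qed

lemma objective_eq_mult_affine:
  assumes "0 < L"
  shows "objective delta h L P = (1 - delta) * (sqrt L *
    (log 2 (1 + P * h) * sqrt L - sqrt (1 - 1 / (1 + P * h)^2) * Qinv delta / ln 2))"
proof -
  have "objective delta h L P = (1 - delta) * (sqrt L * (sqrt L * Rate delta h L P))"
    using assms unfolding objective_def by (simp add: mult.assoc mult.commute)
  then show ?thesis
    unfolding sqrt_mult_Rate[OF assms] .
qed

lemma objective_le_of_Rate_nonneg:
  assumes "0 \<le> P * h" and "delta \<le> 1" and "0 < L" and "L \<le> L'"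
    and "0 \<le> Rate delta h L' P"
  shows "objective delta h L P \<le> objective delta h L' P"
proof -
  define a where "a = log 2 (1 + P * h)"
  define c where "c = sqrt (1 - 1 / (1 + P * h)^2) * Qinv delta / ln 2"
  have "0 < L'"
    using assms by simp
  then have "0 \<le> a * sqrt L' - c"
    using sqrt_mult_Rate[of L' delta h P] assms(5) unfolding a_def c_def
    by (metis real_sqrt_ge_zero less_imp_le zero_le_mult_iff)
  then have "sqrt L * (a * sqrt L - c) \<le> sqrt L' * (a * sqrt L' - c)"
    using assms unfolding a_def by (intro mult_affine_mono) auto
  then show ?thesis
    unfolding objective_eq_mult_affine[OF assms(3)] objective_eq_mult_affine[OF \<open>0 < L'\<close>]
      a_def[symmetric] c_def[symmetric]
    using assms(2) by (intro mult_left_mono) auto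
qed

lemma objective_le_of_quarter_le:
  assumes "0 \<le> P * h" and "delta < 1" and "0 < L" and "L \<le> L'"
    and "objective delta h (L / 4) P \<le> objective delta h L P"
  shows "objective delta h L P \<le> objective delta h L' P"
proof -
  define a where "a = log 2 (1 + P * h)"
  define c where "c = sqrt (1 - 1 / (1 + P * h)^2) * Qinv delta / ln 2"
  define F where "F s = s * (a * s - c)" for s
  have obj: "objective delta h K P = (1 - delta) * F (sqrt K)" if "0 < K" for K
    using that unfolding F_def a_def c_def by (rule objective_eq_mult_affine)
  have sqrt_quarter: "sqrt (L / 4) = sqrt L / 2"
    by (simp add: real_sqrt_divide)
  have "0 < L / 4"
    using assms(3) by simp
  have "(1 - delta) * F (sqrt L / 2) \<le> (1 - delta) * F (sqrt L)"
    using assms(5) unfolding obj[OF assms(3)] obj[OF \<open>0 < L / 4\<close>] sqrt_quarter .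
  then have "\<not> F (sqrt L) < F (sqrt L / 2)"
    using assms(2) by (simp add: mult_le_cancel_left_pos)
  then have "F (sqrt L) \<le> F (sqrt L')"
    using mult_affine_gt_halve[of "sqrt L" "sqrt L'" a c] assms
    unfolding F_def a_def by force
  then show ?thesis
    using assms obj[of L] obj[of L'] by (simp add: mult_left_mono)
qed

lemma objective_le_Lopt:
  assumes "0 < lam" and "0 \<le> h" and "delta \<le> 1"
    and "0 \<le> Rate delta h (Lopt M lam eps Lmax P) P" and "feasible M lam eps Lmax L P"
  shows "objective delta h L P \<le> objective delta h (Lopt M lam eps Lmax P) P"
proof (rule objective_le_of_Rate_nonneg)
  show "0 < L" "L \<le> Lopt M lam eps Lmax P" "0 \<le> P * h"
    using assms(2,5) unfolding feasible_iff_le_Lopt[OF assms(1)] by simp_all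
qed (use assms(3,4) in simp_all)

lemma objective_maximiser_eq_Lopt:
  assumes "0 < lam" and "eps \<noteq> 0" and "0 < Lmax" and "0 \<le> h" and "delta < 1"
    and "feasible M lam eps Lmax L0 P0"
    and "\<forall>L. feasible M lam eps Lmax L P0 \<longrightarrow> objective delta h L P0 \<le> objective delta h L0 P0"
  shows "objective delta h L0 P0 = objective delta h (Lopt M lam eps Lmax P0) P0"
proof (rule antisym)
  have "0 < P0" and L0: "0 < L0" "L0 \<le> Lopt M lam eps Lmax P0"
    using assms(6) unfolding feasible_iff_le_Lopt[OF assms(1)] by simp_all
  then have "feasible M lam eps Lmax (L0 / 4) P0"
    unfolding feasible_iff_le_Lopt[OF assms(1)] by simp
  then have "objective delta h (L0 / 4) P0 \<le> objective delta h L0 P0"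
    using assms(7) by blast
  moreover have "0 \<le> P0 * h"
    using \<open>0 < P0\<close> assms(4) by simp
  ultimately show "objective delta h L0 P0 \<le> objective delta h (Lopt M lam eps Lmax P0) P0"
    using objective_le_of_quarter_le assms(5) L0 by blast
  show "objective delta h (Lopt M lam eps Lmax P0) P0 \<le> objective delta h L0 P0"
    using assms(7) feasible_Lopt[OF assms(1-3) \<open>0 < P0\<close>] by blast
qed

theorem proposition1:
  fixes M :: nat and lam eps Lmax delta h :: real
  assumes "M \<ge> 1" and "lam > 0" and "eps > 0" and "Lmax > 0"
    and "0 < delta" and "delta < 1/2" and "h > 0"
  shows "(\<forall>P>0. 0 \<le> Rate delta h (Lopt M lam eps Lmax P) P \<longrightarrow>
            feasible M lam eps Lmax (Lopt M lam eps Lmax P) P \<and>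
            (\<forall>L. feasible M lam eps Lmax L P \<longrightarrow>
                 objective delta h L P \<le> objective delta h (Lopt M lam eps Lmax P) P))
       \<and> (\<forall>L0 P0. feasible M lam eps Lmax L0 P0 \<and>
            (\<forall>L P. feasible M lam eps Lmax L P \<longrightarrow>
                 objective delta h L P \<le> objective delta h L0 P0) \<longrightarrow>
            objective delta h L0 P0 = objective delta h (Lopt M lam eps Lmax P0) P0 \<and>
            (\<forall>P>0. objective delta h (Lopt M lam eps Lmax P) P
                   \<le> objective delta h (Lopt M lam eps Lmax P0) P0))"
proof -
  have "eps \<noteq> 0" "0 \<le> h" "delta < 1"
    using assms by simp_all
  note feasible_Lopt = feasible_Lopt[OF assms(2) \<open>eps \<noteq> 0\<close> assms(4)]
  have global_maximiser:
    "objective delta h L0 P0 = objective delta h (Lopt M lam eps Lmax P0) P0 \<and>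
     (\<forall>P>0. objective delta h (Lopt M lam eps Lmax P) P
        \<le> objective delta h (Lopt M lam eps Lmax P0) P0)"
    if "feasible M lam eps Lmax L0 P0"
      and max: "\<forall>L P. feasible M lam eps Lmax L P \<longrightarrow> objective delta h L P \<le> objective delta h L0 P0"
    for L0 P0
  proof -
    have "objective delta h L0 P0 = objective delta h (Lopt M lam eps Lmax P0) P0"
      using that objective_maximiser_eq_Lopt[OF assms(2) \<open>eps \<noteq> 0\<close> assms(4) \<open>0 \<le> h\<close> \<open>delta < 1\<close>]
      by blast
    with max feasible_Lopt show ?thesis
      by fastforce
  qed
  show ?thesis
    using feasible_Lopt objective_le_Lopt[OF assms(2) \<open>0 \<le> h\<close> less_imp_le[OF \<open>delta < 1\<close>]]
      global_maximiser
    by blast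
qed

end
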